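(* For every type vector $\kappa$: (1) If $\mathbb{E}[f(x)]<c$, then $G_{IC}(\kappa)=G^*_{IC}(\kappa)=\{\varnothing\}$. (2) If $\mathbb{E}[f(x)]\ge c$, then $G_{IC}(\kappa)\supseteq G_C(\kappa)$ and $G^*_{IC}(\kappa)\supseteq G^*_C(\kappa)$.
   Context: Model. There are $N\ge 2$ agents $I=\{1,\dots,N\}$. Each agent $i$ has a private type $k_i\in X$; types are drawn i.i.d. from a prior distribution $H$ on $X$, and $\kappa=(k_1,\dots,k_N)$ is the type vector. There is a function $f:X\to\mathbb{R}_{>0}$, a link cost $c>0$ and a decay factor $\delta\in(0,1)$; $\mathbb{E}[f(x)]=\int_X f\,dH$ is assumed well defined. A network ${\bf g}$ is a set of unordered pairs $ij$ ($i\neq j$), called links. Agents $i,j$ are connected in ${\bf g}$ if there is a path of links between them; $d_{ij}$ is the length of a shortest such path ($\infty$ if not connected); $C_i$ denotes the component of ${\bf g}$ containing $i$. Agent $i$'s payoff is $u_i({\bf g})=\sum_{j\neq i,\ j\text{ connected to }i}\delta^{d_{ij}-1}f(k_j)-c\cdot\#\{j: ij\in{\bf g}\}$. Dynamics. The network is empty at $t=0$. In each period $t\ge1$ one unordered pair $(i,j)$ is selected; the sequence of selected pairs up to $t$ is the selection path $\gamma(t)$. The selected agents observe each other's components and simultaneously choose $a_{ij},a_{ji}\in\{0,1\}$ (1 = agree to form the link if absent / keep it if present, 0 = refuse / sever); after the period the link $ij$ is present iff $a_{ij}=a_{ji}=1$. Agents are myopic and play the stable optimistic equilibrium (SOE):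 agent $i$ chooses $1$ iff his expected current payoff (w.r.t. his belief) from the network resulting with the link $ij$ is at least his current payoff without it. Information. Under complete information every agent knows $\kappa$. Under incomplete information (simple updating rule), if $i$ and $j$ have ever been connected at some period so far, each knows the other's type; otherwise each one's belief about the other's type is the prior $H$. Emergence and stability. Given a selection path $\gamma(t)$, the resulting network ${\bf g}(\gamma(t))$ and beliefs $B(\gamma(t))$ are uniquely determined. A network ${\bf g}$ can emerge if ${\bf g}={\bf g}(\gamma(t))$ for some selection path $\gamma(t)$. A pair $({\bf g},B)$ is stable if no link is formed or severed along any subsequent selection path. The process can converge to ${\bf g}$ if for some selection path $\gamma(t)$, ${\bf g}={\bf g}(\gamma(t))$ and $({\bf g}(\gamma(t)),B(\gamma(t)))$ is stable. $G_C(\kappa)$ (resp. $G_{IC}(\kappa)$) is the set of networks that can emerge under complete (resp. incomplete) information, and $G^*_C(\kappa)$ (resp. $G^*_{IC}(\kappa)$) the set of networks to which the process can converge under complete (resp. incomplete) information. *)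

theory Defs
  imports "HOL-Probability.Probability"
begin

text \<open>Agents are the natural numbers 0..N-1. A network is a set of links, each
link being a two-element set {i,j} with i \<noteq> j. A type vector is a function
kappa :: nat \<Rightarrow> 'x (only the values at agents 0..N-1 matter).\<close>

type_synonym network = "nat set set"

inductive reach :: "network \<Rightarrow> nat \<Rightarrow> nat \<Rightarrow> nat \<Rightarrow> bool" where
  reach_refl: "reach g i i 0"
| reach_step: "reach g i k n \<Longrightarrow> {k, j} \<in> g \<Longrightarrow> reach g i j (Suc n)"

definition net_connected :: "network \<Rightarrow> nat \<Rightarrow> nat \<Rightarrow> bool" where
  "net_connected g i j \<longleftrightarrow> (\<exists>n. reach g i j n)"

text \<open>Length of a shortest path (only used for net_connected pairs).\<close>
definition net_dist :: "network \<Rightarrow> nat \<Rightarrow> nat \<Rightarrow> nat" where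
  "net_dist g i j = (LEAST n. reach g i j n)"

definition net_degree :: "nat \<Rightarrow> network \<Rightarrow> nat \<Rightarrow> nat" where
  "net_degree N g i = card {j. j < N \<and> {i, j} \<in> g}"

text \<open>Belief of agent i about agent j's value of f: the true value if types are
known (ci information, or i and j have been net_connected at some period,
recorded in the set K of known pairs), otherwise the prior mean E.\<close>
definition belief_val ::
  "bool \<Rightarrow> ('x \<Rightarrow> real) \<Rightarrow> real \<Rightarrow> (nat \<Rightarrow> 'x) \<Rightarrow> nat set set \<Rightarrow> nat \<Rightarrow> nat \<Rightarrow> real" where
  "belief_val ci f E kappa K i j =
     (if ci \<or> {i, j} \<in> K then f (kappa j) else E)"

definition exp_payoff ::
  "bool \<Rightarrow> nat \<Rightarrow> ('x \<Rightarrow> real) \<Rightarrow> real \<Rightarrow> real \<Rightarrow> real \<Rightarrow> (nat \<Rightarrow> 'x) \<Rightarrow>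
   nat set set \<Rightarrow> network \<Rightarrow> nat \<Rightarrow> real" where
  "exp_payoff ci N f c \<delta> E kappa K g i =
     (\<Sum>j\<in>{j. j < N \<and> j \<noteq> i \<and> net_connected g i j}.
        \<delta> ^ (net_dist g i j - 1) * belief_val ci f E kappa K i j)
     - c * real (net_degree N g i)"

definition conn_pairs :: "nat \<Rightarrow> network \<Rightarrow> nat set set" where
  "conn_pairs N g = {{a, b} | a b. a < N \<and> b < N \<and> a \<noteq> b \<and> net_connected g a b}"

text \<open>One period: pair (i,j) selected, myopic net_stable optimistic equilibrium
decisions, then simple belief updating.\<close>
definition step ::
  "bool \<Rightarrow> nat \<Rightarrow> ('x \<Rightarrow> real) \<Rightarrow> real \<Rightarrow> real \<Rightarrow> real \<Rightarrow> (nat \<Rightarrow> 'x) \<Rightarrow>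
   network \<times> nat set set \<Rightarrow> nat \<times> nat \<Rightarrow> network \<times> nat set set" where
  "step ci N f c \<delta> E kappa st p =
     (let g = fst st; K = snd st; i = fst p; j = snd p;
          gp = g \<union> {{i, j}}; gm = g - {{i, j}};
          ai = (exp_payoff ci N f c \<delta> E kappa K gp i \<ge> exp_payoff ci N f c \<delta> E kappa K gm i);
          aj = (exp_payoff ci N f c \<delta> E kappa K gp j \<ge> exp_payoff ci N f c \<delta> E kappa K gm j);
          g' = (if ai \<and> aj then gp else gm)
      in (g', K \<union> conn_pairs N g'))"

definition run_from ::
  "bool \<Rightarrow> nat \<Rightarrow> ('x \<Rightarrow> real) \<Rightarrow> real \<Rightarrow> real \<Rightarrow> real \<Rightarrow> (nat \<Rightarrow> 'x) \<Rightarrow>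
   network \<times> nat set set \<Rightarrow> (nat \<times> nat) list \<Rightarrow> network \<times> nat set set" where
  "run_from ci N f c \<delta> E kappa st \<gamma> = foldl (step ci N f c \<delta> E kappa) st \<gamma>"

definition run ::
  "bool \<Rightarrow> nat \<Rightarrow> ('x \<Rightarrow> real) \<Rightarrow> real \<Rightarrow> real \<Rightarrow> real \<Rightarrow> (nat \<Rightarrow> 'x) \<Rightarrow>
   (nat \<times> nat) list \<Rightarrow> network \<times> nat set set" where
  "run ci N f c \<delta> E kappa \<gamma> = run_from ci N f c \<delta> E kappa ({}, {}) \<gamma>"

definition valid_path :: "nat \<Rightarrow> (nat \<times> nat) list \<Rightarrow> bool" where
  "valid_path N \<gamma> \<longleftrightarrow> (\<forall>p\<in>set \<gamma>. fst p < N \<and> snd p < N \<and> fst p \<noteq> snd p)"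

text \<open>(g,B) is net_stable: no link is formed or severed along any subsequent
selection path (checking the final network of every path covers every prefix).\<close>
definition net_stable ::
  "bool \<Rightarrow> nat \<Rightarrow> ('x \<Rightarrow> real) \<Rightarrow> real \<Rightarrow> real \<Rightarrow> real \<Rightarrow> (nat \<Rightarrow> 'x) \<Rightarrow>
   network \<times> nat set set \<Rightarrow> bool" where
  "net_stable ci N f c \<delta> E kappa st \<longleftrightarrow>
     (\<forall>\<gamma>. valid_path N \<gamma> \<longrightarrow> fst (run_from ci N f c \<delta> E kappa st \<gamma>) = fst st)"

text \<open>Networks that can emerge (G_C for ci = True, G_IC for ci = False).\<close>
definition emerge ::
  "bool \<Rightarrow> nat \<Rightarrow> ('x \<Rightarrow> real) \<Rightarrow> real \<Rightarrow> real \<Rightarrow> real \<Rightarrow> (nat \<Rightarrow> 'x) \<Rightarrow> network set" where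
  "emerge ci N f c \<delta> E kappa =
     {fst (run ci N f c \<delta> E kappa \<gamma>) | \<gamma>. valid_path N \<gamma>}"

definition converge ::
  "bool \<Rightarrow> nat \<Rightarrow> ('x \<Rightarrow> real) \<Rightarrow> real \<Rightarrow> real \<Rightarrow> real \<Rightarrow> (nat \<Rightarrow> 'x) \<Rightarrow> network set" where
  "converge ci N f c \<delta> E kappa =
     {fst (run ci N f c \<delta> E kappa \<gamma>) | \<gamma>. valid_path N \<gamma> \<and>
        net_stable ci N f c \<delta> E kappa (run ci N f c \<delta> E kappa \<gamma>)}"

end

theory Submission
  imports Defs
begin

text \<open>If the prior mean is below the cost, an agent who knows nothing about a partner expects
  to lose by linking, so from the empty network nobody ever links. Otherwise, an agent who
  does not yet know every member of the component a new link would create always accepts it: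
  such an unknown member can only be reached through the partner, whose belief value is at
  least the cost (either his known type is already worth a link, or it is the prior mean).
  Hence each period of a complete-information selection path, repeated twice, is reproduced
  under incomplete information: after the first repetition either the link was formed and
  both sides learn their whole component, or somebody refused, which only an informed agent
  does, who then also refuses under complete information. Appending every pair twice to the
  doubled path lets agents learn enough to make a complete-information stable network stable
  under incomplete information too.\<close>

lemma reach_mono: "reach g a b n \<Longrightarrow> g \<subseteq> g' \<Longrightarrow> reach g' a b n"
  by (induction rule: reach.induct) (auto intro: reach.intros)

lemma reach_0_iff: "reach g a b 0 \<longleftrightarrow> a = b"
  by (auto elim: reach.cases intro: reach.intros)

lemma reach_trans: "reach g b x m \<Longrightarrow> reach g a b n \<Longrightarrow> reach g a x (n + m)"
  by (induction rule: reach.induct) (auto intro: reach.intros)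

lemma reach_source_in_link: "reach g a x n \<Longrightarrow> x = a \<or> (\<exists>e\<in>g. a \<in> e)"
  by (induction rule: reach.induct) auto

lemma reach_target_in_link: "reach g a x n \<Longrightarrow> x \<noteq> a \<Longrightarrow> \<exists>e\<in>g. x \<in> e"
  by (cases rule: reach.cases) auto

lemma reach_empty: "reach {} a b n \<Longrightarrow> a = b"
  using reach_target_in_link by blast

lemma net_connected_refl: "net_connected g a a"
  unfolding net_connected_def by (auto intro: reach.intros)

lemma net_connected_step: "net_connected g a k \<Longrightarrow> {k, x} \<in> g \<Longrightarrow> net_connected g a x"
  unfolding net_connected_def by (auto intro: reach.intros)

lemma net_connected_trans:
  "net_connected g a b \<Longrightarrow> net_connected g b x \<Longrightarrow> net_connected g a x"
  unfolding net_connected_def using reach_trans by blast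

lemma net_connected_mono: "net_connected g a b \<Longrightarrow> g \<subseteq> g' \<Longrightarrow> net_connected g' a b"
  unfolding net_connected_def using reach_mono by blast

lemma reach_add_link_cases:
  "reach G a x n \<Longrightarrow> G = g \<union> {{i, j}} \<Longrightarrow> net_connected (g - {{i, j}}) a x \<or>
     net_connected (g - {{i, j}}) i x \<or> net_connected (g - {{i, j}}) j x"
proof (induction rule: reach.induct)
  case (reach_refl G a)
  then show ?case using net_connected_refl by blast
next
  case (reach_step G a k n x)
  show ?case
  proof (cases "{k, x} \<in> g - {{i, j}}")
    case True
    then show ?thesis using reach_step.IH reach_step.prems net_connected_step by blast
  next
    case False
    then have "{k, x} = {i, j}" using reach_step.hyps(2) reach_step.prems by auto
    then have "x = i \<or> x = j" by (auto simp: doubleton_eq_iff)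
    then show ?thesis using net_connected_refl by blast
  qed
qed

lemma net_connected_add_link_cases:
  "net_connected (g \<union> {{i, j}}) a x \<Longrightarrow> net_connected (g - {{i, j}}) a x \<or>
     net_connected (g - {{i, j}}) i x \<or> net_connected (g - {{i, j}}) j x"
  unfolding net_connected_def[of "g \<union> {{i, j}}"] using reach_add_link_cases by blast

lemma reach_add_pendant:
  assumes pendant: "\<forall>e\<in>g. j \<notin> e"
  shows "reach G a x n \<Longrightarrow> G = g \<union> {{i, j}} \<Longrightarrow> a \<noteq> j \<Longrightarrow>
    (x \<noteq> j \<longrightarrow> (\<exists>n'\<le>n. reach g a x n')) \<and> (x = j \<longrightarrow> (\<exists>n'<n. reach g a i n'))"
proof (induction rule: reach.induct)
  case (reach_refl G a)
  then show ?case by (auto intro: reach.intros)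
next
  case (reach_step G a k n x)
  show ?case
  proof (cases "k = j")
    case True
    then obtain n' where n': "n' < n" "reach g a i n'" using reach_step.IH reach_step.prems by auto
    have "{j, x} = {i, j}" using reach_step.hyps(2) reach_step.prems pendant True by auto
    then have "x = i \<or> x = j" by (auto simp: doubleton_eq_iff)
    then show ?thesis using n' by (metis less_SucI less_imp_le_nat)
  next
    case False
    then obtain n' where n': "n' \<le> n" "reach g a k n'" using reach_step.IH reach_step.prems by auto
    show ?thesis
    proof (cases "x = j")
      case True
      then have "{k, j} = {i, j}" using reach_step.hyps(2) reach_step.prems pendant by auto
      then have "k = i" using False by (auto simp: doubleton_eq_iff)
      then show ?thesis using n' True by (metis le_imp_less_Suc)
    next
      case x_ne_j: False
      then have "{k, x} \<in> g" using reach_step.hyps(2) reach_step.prems False by auto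
      then show ?thesis using x_ne_j n' reach.reach_step by blast
    qed
  qed
qed

lemma net_dist_reach: "net_connected g a b \<Longrightarrow> reach g a b (net_dist g a b)"
  unfolding net_connected_def net_dist_def by (rule LeastI_ex)

lemma net_dist_le: "reach g a b n \<Longrightarrow> net_dist g a b \<le> n"
  unfolding net_dist_def by (rule Least_le)

lemma net_dist_antimono:
  "net_connected g a b \<Longrightarrow> g \<subseteq> G \<Longrightarrow> net_dist G a b \<le> net_dist g a b"
  using net_dist_reach net_dist_le reach_mono by blast

lemma net_dist_link: "{a, b} \<in> G \<Longrightarrow> a \<noteq> b \<Longrightarrow> net_dist G a b = 1"
  unfolding net_dist_def
proof (rule Least_equality)
  assume "{a, b} \<in> G"
  then show "reach G a b 1" using reach.reach_step[OF reach.reach_refl] by fastforce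
next
  fix n assume "a \<noteq> b" "reach G a b n"
  then show "1 \<le> n" using reach_0_iff by (cases n) auto
qed

lemma conn_pairs_empty: "conn_pairs N {} = {}"
  unfolding conn_pairs_def net_connected_def using reach_empty by blast

lemma conn_pairs_empty_subset: "conn_pairs N {} \<subseteq> K"
  by (simp add: conn_pairs_empty)

lemma run_from_Nil [simp]: "run_from ci N f c \<delta> E kappa s [] = s"
  unfolding run_from_def by simp

lemma run_from_Cons [simp]:
  "run_from ci N f c \<delta> E kappa s (p # \<gamma>) =
     run_from ci N f c \<delta> E kappa (step ci N f c \<delta> E kappa s p) \<gamma>"
  unfolding run_from_def by simp

lemma run_from_append:
  "run_from ci N f c \<delta> E kappa s (\<gamma> @ \<gamma>') =
     run_from ci N f c \<delta> E kappa (run_from ci N f c \<delta> E kappa s \<gamma>) \<gamma>'"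
  unfolding run_from_def by simp

lemma valid_path_Cons:
  "valid_path N ((i, j) # \<gamma>) \<longleftrightarrow> i \<noteq> j \<and> i < N \<and> j < N \<and> valid_path N \<gamma>"
  unfolding valid_path_def by auto

lemma valid_path_append: "valid_path N (\<gamma> @ \<gamma>') \<longleftrightarrow> valid_path N \<gamma> \<and> valid_path N \<gamma>'"
  unfolding valid_path_def by auto

lemma run_from_fixed:
  assumes "\<And>i j. i \<noteq> j \<Longrightarrow> i < N \<Longrightarrow> j < N \<Longrightarrow> step ci N f c \<delta> E kappa s (i, j) = s"
  shows "valid_path N \<gamma> \<Longrightarrow> run_from ci N f c \<delta> E kappa s \<gamma> = s"
proof (induction \<gamma>)
  case (Cons p \<gamma>)
  then show ?case using assms by (cases p) (simp add: valid_path_Cons)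
qed simp

lemma net_stable_if_steps_fixed:
  assumes "\<And>i j. i \<noteq> j \<Longrightarrow> i < N \<Longrightarrow> j < N \<Longrightarrow> step ci N f c \<delta> E kappa s (i, j) = s"
  shows "net_stable ci N f c \<delta> E kappa s"
  unfolding net_stable_def using run_from_fixed[OF assms] by auto

lemma net_stable_step_fixed:
  assumes "net_stable ci N f c \<delta> E kappa s" and "i \<noteq> j" "i < N" "j < N"
  shows "fst (step ci N f c \<delta> E kappa s (i, j)) = fst s"
  using assms unfolding net_stable_def
  by (metis run_from_Cons run_from_Nil valid_path_Cons valid_path_def empty_iff list.set(1))

lemma emergeI: "valid_path N \<gamma> \<Longrightarrow> run ci N f c \<delta> E kappa \<gamma> = (g, K) \<Longrightarrow>
    g \<in> emerge ci N f c \<delta> E kappa"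
  unfolding emerge_def by (metis (mono_tags, lifting) CollectI fst_conv)

lemma convergeI: "valid_path N \<gamma> \<Longrightarrow> run ci N f c \<delta> E kappa \<gamma> = (g, K) \<Longrightarrow>
    net_stable ci N f c \<delta> E kappa (g, K) \<Longrightarrow> g \<in> converge ci N f c \<delta> E kappa"
  unfolding converge_def by (metis (mono_tags, lifting) CollectI fst_conv)

lemma emerge_converge_if_empty_fixed:
  assumes fixed: "\<And>i j. i \<noteq> j \<Longrightarrow> i < N \<Longrightarrow> j < N \<Longrightarrow>
    step ci N f c \<delta> E kappa ({}, {}) (i, j) = ({}, {})"
  shows "emerge ci N f c \<delta> E kappa = {{}}" "converge ci N f c \<delta> E kappa = {{}}"
proof -
  have runs: "run ci N f c \<delta> E kappa \<gamma> = ({}, {})" if "valid_path N \<gamma>" for \<gamma>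
    unfolding run_def using run_from_fixed[OF fixed that] .
  have stable: "net_stable ci N f c \<delta> E kappa ({}, {})"
    using net_stable_if_steps_fixed[OF fixed] .
  have nil: "valid_path N []" unfolding valid_path_def by simp
  have "emerge ci N f c \<delta> E kappa \<subseteq> {{}}" "converge ci N f c \<delta> E kappa \<subseteq> {{}}"
    unfolding emerge_def converge_def using runs by fastforce+
  moreover have "{} \<in> emerge ci N f c \<delta> E kappa" "{} \<in> converge ci N f c \<delta> E kappa"
    using emergeI[OF nil runs[OF nil]] convergeI[OF nil runs[OF nil] stable] .
  ultimately show "emerge ci N f c \<delta> E kappa = {{}}" "converge ci N f c \<delta> E kappa = {{}}"
    by blast+
qed

definition all_pairs :: "nat \<Rightarrow> (nat \<times> nat) list" where
  "all_pairs N = [(i, j). i \<leftarrow> [0..<N], j \<leftarrow> [0..<N], i \<noteq> j]"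

lemma set_all_pairs: "set (all_pairs N) = {(i, j). i < N \<and> j < N \<and> i \<noteq> j}"
  unfolding all_pairs_def by auto

lemma valid_path_all_pairs: "valid_path N (all_pairs N)"
  unfolding valid_path_def set_all_pairs by auto

definition doubled :: "(nat \<times> nat) list \<Rightarrow> (nat \<times> nat) list" where
  "doubled \<gamma> = concat (map (\<lambda>p. [p, p]) \<gamma>)"

lemma doubled_simps [simp]: "doubled [] = []" "doubled (p # \<gamma>) = p # p # doubled \<gamma>"
  unfolding doubled_def by simp_all

lemma valid_path_doubled: "valid_path N (doubled \<gamma>) = valid_path N \<gamma>"
  unfolding valid_path_def doubled_def by auto

locale network_game =
  fixes N :: nat and f :: "'x \<Rightarrow> real" and c \<delta> E :: real and kappa :: "nat \<Rightarrow> 'x"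
  assumes f_pos: "\<And>m. m < N \<Longrightarrow> 0 < f (kappa m)"
    and cost_pos: "0 < c" and decay_pos: "0 < \<delta>" and decay_le_1: "\<delta> \<le> 1"
begin

abbreviation payoff :: "bool \<Rightarrow> nat set set \<Rightarrow> network \<Rightarrow> nat \<Rightarrow> real" where
  "payoff ci K g a \<equiv> exp_payoff ci N f c \<delta> E kappa K g a"

abbreviation belief :: "bool \<Rightarrow> nat set set \<Rightarrow> nat \<Rightarrow> nat \<Rightarrow> real" where
  "belief ci K a b \<equiv> belief_val ci f E kappa K a b"

abbreviation step_game :: "bool \<Rightarrow> network \<times> nat set set \<Rightarrow> nat \<times> nat \<Rightarrow> network \<times> nat set set"
  where "step_game ci \<equiv> step ci N f c \<delta> E kappa"

abbreviation run_game ::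
  "bool \<Rightarrow> network \<times> nat set set \<Rightarrow> (nat \<times> nat) list \<Rightarrow> network \<times> nat set set"
  where "run_game ci \<equiv> run_from ci N f c \<delta> E kappa"

definition accepts :: "bool \<Rightarrow> nat set set \<Rightarrow> network \<Rightarrow> nat \<Rightarrow> nat \<Rightarrow> bool" where
  "accepts ci K g a b \<longleftrightarrow> payoff ci K (g - {{a, b}}) a \<le> payoff ci K (g \<union> {{a, b}}) a"

definition link_agreed :: "bool \<Rightarrow> nat set set \<Rightarrow> network \<Rightarrow> nat \<Rightarrow> nat \<Rightarrow> bool" where
  "link_agreed ci K g i j \<longleftrightarrow> accepts ci K g i j \<and> accepts ci K g j i"

definition move :: "bool \<Rightarrow> nat set set \<Rightarrow> network \<Rightarrow> nat \<Rightarrow> nat \<Rightarrow> network" where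
  "move ci K g i j = (if link_agreed ci K g i j then g \<union> {{i, j}} else g - {{i, j}})"

definition worthwhile :: "network \<Rightarrow> bool" where
  "worthwhile g \<longleftrightarrow> (\<forall>e\<in>g. \<forall>x\<in>e. c \<le> f (kappa x))"

definition knows_component :: "nat set set \<Rightarrow> network \<Rightarrow> nat \<Rightarrow> bool" where
  "knows_component K g a \<longleftrightarrow> (\<forall>m<N. m \<noteq> a \<longrightarrow> net_connected g a m \<longrightarrow> {a, m} \<in> K)"

lemma step_eq: "step_game ci (g, K) (i, j) = (move ci K g i j, K \<union> conn_pairs N (move ci K g i j))"
proof -
  have "{j, i} = {i, j}" by auto
  then show ?thesis unfolding step_def move_def link_agreed_def accepts_def Let_def by simp
qed

lemma accepts_complete_indep: "accepts True K g a b = accepts True K' g a b"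
  unfolding accepts_def exp_payoff_def belief_val_def by simp

lemma move_complete_indep: "move True K g i j = move True K' g i j"
  unfolding move_def link_agreed_def using accepts_complete_indep by metis

lemma accepts_cong_network:
  "g' \<union> {{a, b}} = g \<union> {{a, b}} \<Longrightarrow> g' - {{a, b}} = g - {{a, b}} \<Longrightarrow>
    accepts ci K g' a b = accepts ci K g a b"
  unfolding accepts_def by simp

lemma move_union_link: "move ci K g i j \<union> {{i, j}} = g \<union> {{i, j}}"
  unfolding move_def by auto

lemma move_diff_link: "move ci K g i j - {{i, j}} = g - {{i, j}}"
  unfolding move_def by auto

lemma link_agreed_move: "link_agreed ci K (move ci' K' g i j) i j = link_agreed ci K g i j"
proof -
  have ji: "{j, i} = {i, j}" by (rule insert_commute)
  have "accepts ci K (move ci' K' g i j) i j = accepts ci K g i j"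
    by (rule accepts_cong_network) (simp_all only: move_union_link move_diff_link)
  moreover have "accepts ci K (move ci' K' g i j) j i = accepts ci K g j i"
    by (rule accepts_cong_network) (simp_all only: ji move_union_link move_diff_link)
  ultimately show ?thesis unfolding link_agreed_def by simp
qed

lemma move_move: "move ci K (move ci' K' g i j) i j = move ci K g i j"
  by (simp only: move_def[of ci K] link_agreed_move move_union_link move_diff_link)

lemma net_degree_add_link:
  assumes "{i, j} \<notin> g" and "i \<noteq> j" "j < N"
  shows "net_degree N (g \<union> {{i, j}}) i = Suc (net_degree N g i)"
proof -
  define D where "D = {m. m < N \<and> {i, m} \<in> g}"
  have "{m. m < N \<and> {i, m} \<in> g \<union> {{i, j}}} = insert j D"
    unfolding D_def using assms(2,3) by (auto simp: doubleton_eq_iff)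
  then have "net_degree N (g \<union> {{i, j}}) i = card (insert j D)"
    unfolding net_degree_def by simp
  moreover have "net_degree N g i = card D" unfolding net_degree_def D_def ..
  moreover have "j \<notin> D" "finite D" unfolding D_def using assms(1) by simp_all
  ultimately show ?thesis by simp
qed

lemma payoff_add_pendant:
  assumes pendant: "\<forall>e\<in>g. j \<notin> e" and ij: "i \<noteq> j" "i < N" "j < N"
  shows "payoff ci K (g \<union> {{i, j}}) i = payoff ci K g i + belief ci K i j - c"
proof -
  let ?G = "g \<union> {{i, j}}"
  let ?b = "belief ci K i"
  define S where "S = {m. m < N \<and> m \<noteq> i \<and> net_connected g i m}"
  have j_notin_S: "j \<notin> S"
    using reach_target_in_link ij pendant unfolding S_def net_connected_def by blast
  have S_G: "{m. m < N \<and> m \<noteq> i \<and> net_connected ?G i m} = insert j S"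
  proof
    show "{m. m < N \<and> m \<noteq> i \<and> net_connected ?G i m} \<subseteq> insert j S"
      using reach_add_pendant[OF pendant _ refl] ij unfolding S_def net_connected_def by blast
    show "insert j S \<subseteq> {m. m < N \<and> m \<noteq> i \<and> net_connected ?G i m}"
      using net_connected_step[OF net_connected_refl, of i j ?G] net_connected_mono[of g i _ ?G] ij
      unfolding S_def by auto
  qed
  have dist_eq: "net_dist ?G i m = net_dist g i m" if "m \<in> S" for m
  proof (rule antisym)
    have "net_connected g i m" using that unfolding S_def by auto
    then show "net_dist ?G i m \<le> net_dist g i m" using net_dist_antimono by blast
    then have "reach ?G i m (net_dist ?G i m)"
      using net_dist_reach net_connected_mono \<open>net_connected g i m\<close> by blast
    moreover have "m \<noteq> j" using that j_notin_S by auto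
    ultimately obtain n' where "n' \<le> net_dist ?G i m" "reach g i m n'"
      using reach_add_pendant[OF pendant _ refl] ij by blast
    then show "net_dist g i m \<le> net_dist ?G i m" using net_dist_le order_trans by blast
  qed
  have "finite S" unfolding S_def by simp
  have "(\<Sum>m\<in>S. \<delta> ^ (net_dist ?G i m - 1) * ?b m) = (\<Sum>m\<in>S. \<delta> ^ (net_dist g i m - 1) * ?b m)"
    using dist_eq by (intro sum.cong) auto
  then have sum_eq: "(\<Sum>m\<in>insert j S. \<delta> ^ (net_dist ?G i m - 1) * ?b m) =
      ?b j + (\<Sum>m\<in>S. \<delta> ^ (net_dist g i m - 1) * ?b m)"
    using \<open>finite S\<close> j_notin_S net_dist_link[of i j ?G] ij by simp
  have degree: "net_degree N ?G i = Suc (net_degree N g i)"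
    using net_degree_add_link pendant ij by blast
  have "payoff ci K ?G i =
      (\<Sum>m\<in>insert j S. \<delta> ^ (net_dist ?G i m - 1) * ?b m) - c * real (net_degree N ?G i)"
    unfolding exp_payoff_def S_G ..
  also have "\<dots> = ?b j + (\<Sum>m\<in>S. \<delta> ^ (net_dist g i m - 1) * ?b m) - c * real (net_degree N g i) - c"
    unfolding sum_eq degree by (simp add: algebra_simps)
  also have "\<dots> = payoff ci K g i + ?b j - c"
    unfolding exp_payoff_def S_def by simp
  finally show ?thesis .
qed

text \<open>Adding the link can only shorten distances, so every old term of the payoff survives
  (beliefs being nonnegative), and the new partner contributes at distance one.\<close>
lemma payoff_add_link_ge:
  assumes disconnected: "\<not> net_connected g i j" and ij: "i \<noteq> j" "i < N" "j < N"
    and nonneg: "\<And>x. x < N \<Longrightarrow> 0 \<le> belief ci K i x"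
  shows "payoff ci K g i + belief ci K i j - c \<le> payoff ci K (g \<union> {{i, j}}) i"
proof -
  let ?G = "g \<union> {{i, j}}"
  let ?b = "belief ci K i"
  let ?t = "\<lambda>x. \<delta> ^ (net_dist g i x - 1) * ?b x"
  let ?tG = "\<lambda>x. \<delta> ^ (net_dist ?G i x - 1) * ?b x"
  define S where "S = {m. m < N \<and> m \<noteq> i \<and> net_connected g i m}"
  define SG where "SG = {m. m < N \<and> m \<noteq> i \<and> net_connected ?G i m}"
  have j_notin_S: "j \<notin> S" and "finite S" using disconnected unfolding S_def by auto
  have "(\<Sum>x\<in>S. ?t x) \<le> (\<Sum>x\<in>S. ?tG x)"
  proof (rule sum_mono)
    fix x assume x: "x \<in> S"
    then have "net_dist ?G i x \<le> net_dist g i x"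
      using net_dist_antimono[of g i x ?G] unfolding S_def by auto
    then have "\<delta> ^ (net_dist g i x - 1) \<le> \<delta> ^ (net_dist ?G i x - 1)"
      using power_decreasing[of "net_dist ?G i x - 1" "net_dist g i x - 1" \<delta>] decay_pos decay_le_1
      by auto
    then show "?t x \<le> ?tG x" using nonneg x unfolding S_def by (auto intro: mult_right_mono)
  qed
  also have "\<dots> = (\<Sum>x\<in>insert j S. ?tG x) - ?b j"
    using j_notin_S net_dist_link[of i j ?G] ij by (simp add: \<open>finite S\<close>)
  also have "\<dots> \<le> (\<Sum>x\<in>SG. ?tG x) - ?b j"
  proof -
    have "insert j S \<subseteq> SG"
      using net_connected_step[OF net_connected_refl, of i j ?G] net_connected_mono[of g i _ ?G] ij
      unfolding SG_def S_def by auto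
    then show ?thesis
      using nonneg decay_pos by (intro diff_right_mono sum_mono2) (auto simp: SG_def)
  qed
  finally have sums: "(\<Sum>x\<in>S. ?t x) + ?b j \<le> (\<Sum>x\<in>SG. ?tG x)" by simp
  have "{i, j} \<notin> g" using disconnected net_connected_step[OF net_connected_refl] by blast
  then have "net_degree N ?G i = Suc (net_degree N g i)" using net_degree_add_link ij by blast
  moreover have "payoff ci K g i = (\<Sum>x\<in>S. ?t x) - c * real (net_degree N g i)"
    "payoff ci K ?G i = (\<Sum>x\<in>SG. ?tG x) - c * real (net_degree N ?G i)"
    unfolding exp_payoff_def S_def SG_def by simp_all
  ultimately show ?thesis using sums by (simp add: algebra_simps)
qed

lemma payoff_eq_complete_if_knows_component:
  assumes "knows_component K G a" "H \<subseteq> G"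
  shows "payoff False K H a = payoff True K' H a"
  unfolding exp_payoff_def
proof (intro arg_cong2[where f = "(-)"] refl sum.cong)
  fix m assume "m \<in> {j. j < N \<and> j \<noteq> a \<and> net_connected H a j}"
  then have "{a, m} \<in> K" using assms net_connected_mono unfolding knows_component_def by blast
  then show "\<delta> ^ (net_dist H a m - 1) * belief False K a m =
      \<delta> ^ (net_dist H a m - 1) * belief True K' a m"
    unfolding belief_val_def by simp
qed

lemma accepts_eq_complete_if_knows_component:
  assumes "knows_component K (g \<union> {{a, b}}) a"
  shows "accepts False K g a b = accepts True K' g a b"
proof -
  have "payoff False K (g - {{a, b}}) a = payoff True K' (g - {{a, b}}) a"
    "payoff False K (g \<union> {{a, b}}) a = payoff True K' (g \<union> {{a, b}}) a"
    by (rule payoff_eq_complete_if_knows_component[OF assms]; blast)+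
  then show ?thesis unfolding accepts_def by simp
qed

lemma knows_component_mono: "K \<subseteq> K' \<Longrightarrow> knows_component K G a \<Longrightarrow> knows_component K' G a"
  unfolding knows_component_def by blast

lemma knows_component_if_conn_pairs:
  "conn_pairs N G \<subseteq> K \<Longrightarrow> a < N \<Longrightarrow> knows_component K G a"
  unfolding knows_component_def conn_pairs_def by blast

lemma worthwhile_empty: "worthwhile {}"
  unfolding worthwhile_def by simp

lemma worthwhile_mono: "H \<subseteq> g \<Longrightarrow> worthwhile g \<Longrightarrow> worthwhile H"
  unfolding worthwhile_def by blast

lemma worthwhile_partner_if_accepts_complete:
  assumes "worthwhile g" and "accepts True K g a b" and ab: "a \<noteq> b" "a < N" "b < N"
  shows "c \<le> f (kappa b)"
proof (cases "\<exists>e\<in>g. b \<in> e")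
  case True
  then show ?thesis using \<open>worthwhile g\<close> unfolding worthwhile_def by blast
next
  case False
  then have pendant: "\<forall>e\<in>g. b \<notin> e" by blast
  then have "g - {{a, b}} = g" by auto
  then have "payoff True K g a \<le> payoff True K (g \<union> {{a, b}}) a"
    using \<open>accepts True K g a b\<close> unfolding accepts_def by simp
  then show ?thesis using payoff_add_pendant[OF pendant ab] unfolding belief_val_def by simp
qed

lemma worthwhile_move_complete:
  assumes "worthwhile g" and ij: "i \<noteq> j" "i < N" "j < N"
  shows "worthwhile (move True K g i j)"
proof (cases "link_agreed True K g i j")
  case True
  then have "c \<le> f (kappa j)" "c \<le> f (kappa i)"
    using worthwhile_partner_if_accepts_complete[OF assms(1) _ ij]
      worthwhile_partner_if_accepts_complete[OF assms(1) _ ij(1)[symmetric] ij(3,2)]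
    unfolding link_agreed_def by blast+
  then show ?thesis using True assms(1) unfolding move_def worthwhile_def by auto
next
  case False
  then show ?thesis using worthwhile_mono[OF _ assms(1)] unfolding move_def by auto
qed

lemma step_from_empty_if_prior_below_cost:
  assumes "E < c" and ij: "i \<noteq> j" "i < N" "j < N"
  shows "step_game False ({}, {}) (i, j) = ({}, {})"
proof -
  have "payoff False {} {{i, j}} i = payoff False {} {} i + E - c"
    using payoff_add_pendant[of "{}" j i] ij unfolding belief_val_def by simp
  then have "\<not> accepts False {} {} i j" unfolding accepts_def using \<open>E < c\<close> by simp
  then show ?thesis
    unfolding step_eq move_def link_agreed_def by (simp add: conn_pairs_empty)
qed

lemma emerge_converge_if_prior_below_cost:
  assumes "E < c"
  shows "emerge False N f c \<delta> E kappa = {{}}" "converge False N f c \<delta> E kappa = {{}}"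
  using emerge_converge_if_empty_fixed[OF step_from_empty_if_prior_below_cost[OF assms]]
  by simp_all

context
  assumes prior_ge_cost: "c \<le> E"
begin

lemma accepts_if_not_knows_component:
  assumes "worthwhile g" and known: "conn_pairs N g \<subseteq> K" and ij: "i \<noteq> j" "i < N" "j < N"
    and "\<not> knows_component K (g \<union> {{i, j}}) i"
  shows "accepts False K g i j"
proof -
  let ?M = "g - {{i, j}}"
  obtain m where m: "m < N" "m \<noteq> i" "net_connected (g \<union> {{i, j}}) i m" "{i, m} \<notin> K"
    using assms(6) unfolding knows_component_def by blast
  have "\<not> net_connected ?M i m"
  proof
    assume "net_connected ?M i m"
    then have "{i, m} \<in> conn_pairs N g"
      using net_connected_mono[of ?M i m g] m ij unfolding conn_pairs_def by blast
    then show False using known m by blast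
  qed
  then have "net_connected ?M j m" using net_connected_add_link_cases[OF m(3)] by blast
  then have disconnected: "\<not> net_connected ?M i j"
    using net_connected_trans \<open>\<not> net_connected ?M i m\<close> by blast
  have "c \<le> belief False K i j"
  proof (cases "{i, j} \<in> K")
    case True
    then have "m \<noteq> j" using m by auto
    then obtain e where "e \<in> g" "j \<in> e"
      using \<open>net_connected ?M j m\<close> reach_source_in_link unfolding net_connected_def by blast
    then show ?thesis using True \<open>worthwhile g\<close> unfolding belief_val_def worthwhile_def by auto
  next
    case False
    then show ?thesis using prior_ge_cost unfolding belief_val_def by simp
  qed
  moreover have "0 \<le> belief False K i x" if "x < N" for x
    using f_pos[OF that] prior_ge_cost cost_pos unfolding belief_val_def by simp
  ultimately show ?thesis
    using payoff_add_link_ge[OF disconnected ij, of False K] unfolding accepts_def by simp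
qed

lemma accepts_if_accepts_complete:
  assumes "worthwhile g" "conn_pairs N g \<subseteq> K" "i \<noteq> j" "i < N" "j < N"
    and "accepts True K' g i j"
  shows "accepts False K g i j"
  using accepts_eq_complete_if_knows_component accepts_if_not_knows_component[OF assms(1-5)] assms(6)
  by blast

lemma accepts_antimono_knowledge:
  assumes "worthwhile g" "conn_pairs N g \<subseteq> K" "i \<noteq> j" "i < N" "j < N"
    and "K \<subseteq> K'" and "accepts False K' g i j"
  shows "accepts False K g i j"
proof (cases "knows_component K (g \<union> {{i, j}}) i")
  case True
  then show ?thesis
    using knows_component_mono[OF assms(6) True] accepts_eq_complete_if_knows_component assms(7) by blast
qed (use accepts_if_not_knows_component[OF assms(1-5)] in blast)

text \<open>A link accepted under complete information is accepted whatever is known, and a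
  refusal under incomplete information persists as knowledge grows.\<close>
lemma link_agreed_complete_persists:
  assumes "worthwhile g" "conn_pairs N g \<subseteq> K" and ij: "i \<noteq> j" "i < N" "j < N"
    and "K \<subseteq> K'" and "link_agreed False K g i j = link_agreed True {} g i j"
  shows "link_agreed False K' g i j = link_agreed True {} g i j"
proof -
  have known': "conn_pairs N g \<subseteq> K'" using assms(2,6) by blast
  show ?thesis
  proof (cases "link_agreed True {} g i j")
    case True
    then show ?thesis
      using accepts_if_accepts_complete[OF assms(1) known' ij]
        accepts_if_accepts_complete[OF assms(1) known' ij(1)[symmetric] ij(3,2)]
      unfolding link_agreed_def by blast
  next
    case False
    then have "\<not> link_agreed False K g i j" using assms(7) by simp
    then show ?thesis
      using False accepts_antimono_knowledge[OF assms(1,2) ij assms(6)]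
        accepts_antimono_knowledge[OF assms(1,2) ij(1)[symmetric] ij(3,2) assms(6)]
      unfolding link_agreed_def by blast
  qed
qed

lemma double_step_simulates_complete:
  assumes "worthwhile g" and known: "conn_pairs N g \<subseteq> K" and ij: "i \<noteq> j" "i < N" "j < N"
  obtains K'' where
    "step_game False (step_game False (g, K) (i, j)) (i, j) = (move True {} g i j, K'')"
    "K \<subseteq> K''" "conn_pairs N (move True {} g i j) \<subseteq> K''"
    "link_agreed False K'' g i j = link_agreed True {} g i j"
proof -
  define K' where "K' = K \<union> conn_pairs N (move False K g i j)"
  have first: "step_game False (g, K) (i, j) = (move False K g i j, K')"
    unfolding step_eq K'_def ..
  have agreed: "link_agreed False K' g i j = link_agreed True {} g i j"
  proof (cases "link_agreed False K g i j")
    case True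
    then have "conn_pairs N (g \<union> {{i, j}}) \<subseteq> K'" unfolding K'_def move_def by auto
    moreover have "g \<union> {{j, i}} = g \<union> {{i, j}}" by auto
    ultimately show ?thesis
      using knows_component_if_conn_pairs ij accepts_eq_complete_if_knows_component
      unfolding link_agreed_def by metis
  next
    case False
    then have "\<not> link_agreed True {} g i j"
      using accepts_if_accepts_complete[OF assms(1,2) ij]
        accepts_if_accepts_complete[OF assms(1,2) ij(1)[symmetric] ij(3,2)]
      unfolding link_agreed_def by blast
    then show ?thesis
      using link_agreed_complete_persists[OF assms(1,2) ij, of K'] False unfolding K'_def by blast
  qed
  have second: "step_game False (move False K g i j, K') (i, j) =
      (move True {} g i j, K' \<union> conn_pairs N (move True {} g i j))"
    unfolding step_eq move_move using agreed by (simp add: move_def)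
  show thesis
  proof (rule that)
    have "conn_pairs N g \<subseteq> K'" using known unfolding K'_def by blast
    then show "link_agreed False (K' \<union> conn_pairs N (move True {} g i j)) g i j =
        link_agreed True {} g i j"
      using link_agreed_complete_persists[OF assms(1) _ ij _ agreed] by blast
  qed (use first second in \<open>auto simp: K'_def\<close>)
qed

lemma fst_run_complete_indep: "fst (run_game True (g, K) \<gamma>) = fst (run_game True (g, K') \<gamma>)"
proof (induction \<gamma> arbitrary: g K K')
  case (Cons p \<gamma>)
  obtain i j where p: "p = (i, j)" by fastforce
  have "move True K g i j = move True K' g i j" by (rule move_complete_indep)
  then show ?case using Cons.IH by (simp add: p step_eq)
qed simp

lemma doubled_run_simulates_complete:
  assumes "valid_path N \<gamma>" "worthwhile g" "conn_pairs N g \<subseteq> K"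
  obtains K' where "run_game False (g, K) (doubled \<gamma>) = (fst (run_game True (g, {}) \<gamma>), K')"
    "worthwhile (fst (run_game True (g, {}) \<gamma>))"
    "conn_pairs N (fst (run_game True (g, {}) \<gamma>)) \<subseteq> K'"
  using assms
proof (induction \<gamma> arbitrary: g K thesis)
  case Nil
  then show ?case by simp
next
  case (Cons p \<gamma>)
  obtain i j where p: "p = (i, j)" by fastforce
  have ij: "i \<noteq> j" "i < N" "j < N" and valid: "valid_path N \<gamma>"
    using Cons.prems(2) unfolding p valid_path_Cons by auto
  obtain K'' where K'': "step_game False (step_game False (g, K) (i, j)) (i, j) = (move True {} g i j, K'')"
    "conn_pairs N (move True {} g i j) \<subseteq> K''"
    using double_step_simulates_complete[OF Cons.prems(3,4) ij] by metis
  have complete: "fst (run_game True (g, {}) (p # \<gamma>)) = fst (run_game True (move True {} g i j, {}) \<gamma>)"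
    unfolding p run_from_Cons step_eq by (rule fst_run_complete_indep)
  have incomplete: "run_game False (g, K) (doubled (p # \<gamma>)) =
      run_game False (move True {} g i j, K'') (doubled \<gamma>)"
    using K''(1) p by simp
  obtain K' where
      "run_game False (move True {} g i j, K'') (doubled \<gamma>) = (fst (run_game True (move True {} g i j, {}) \<gamma>), K')"
      "worthwhile (fst (run_game True (move True {} g i j, {}) \<gamma>))"
      "conn_pairs N (fst (run_game True (move True {} g i j, {}) \<gamma>)) \<subseteq> K'"
    using Cons.IH[OF _ valid worthwhile_move_complete[OF Cons.prems(3) ij] K''(2)] by blast
  then show ?case by (intro Cons.prems(1)) (simp_all only: incomplete complete)
qed

lemma doubled_run_learns_fixed_network:
  assumes "worthwhile g" and "valid_path N L"
    and "\<forall>(i, j)\<in>set L. move True {} g i j = g" and "conn_pairs N g \<subseteq> K"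
  obtains K' where "run_game False (g, K) (doubled L) = (g, K')" "K \<subseteq> K'"
    "\<forall>(i, j)\<in>set L. link_agreed False K' g i j = link_agreed True {} g i j"
  using assms(2-)
proof (induction L arbitrary: K thesis)
  case Nil
  then show ?case by simp
next
  case (Cons p L)
  obtain i j where p: "p = (i, j)" by fastforce
  have ij: "i \<noteq> j" "i < N" "j < N" and valid: "valid_path N L"
    using Cons.prems(2) unfolding p valid_path_Cons by auto
  have fixed: "move True {} g i j = g" and fixed_rest: "\<forall>(i, j)\<in>set L. move True {} g i j = g"
    using Cons.prems(3) p by auto
  obtain K'' where K'': "step_game False (step_game False (g, K) (i, j)) (i, j) = (g, K'')"
    "K \<subseteq> K''" "conn_pairs N g \<subseteq> K''" "link_agreed False K'' g i j = link_agreed True {} g i j"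
    using double_step_simulates_complete[OF assms(1) Cons.prems(4) ij] unfolding fixed by blast
  obtain K' where K': "run_game False (g, K'') (doubled L) = (g, K')" "K'' \<subseteq> K'"
    "\<forall>(i, j)\<in>set L. link_agreed False K' g i j = link_agreed True {} g i j"
    using Cons.IH[OF _ valid fixed_rest K''(3)] by blast
  have "link_agreed False K' g i j = link_agreed True {} g i j"
    using link_agreed_complete_persists[OF assms(1) K''(3) ij K'(2) K''(4)] .
  moreover have "run_game False (g, K) (doubled (p # L)) = (g, K')"
    using K''(1) K'(1) p by simp
  moreover have "K \<subseteq> K'" using K''(2) K'(2) by blast
  ultimately show ?case using Cons.prems(1) K'(3) p by simp
qed

lemma doubled_run_simulates_complete_from_empty:
  assumes "valid_path N \<gamma>"
  obtains K' where "run False N f c \<delta> E kappa (doubled \<gamma>) = (fst (run True N f c \<delta> E kappa \<gamma>), K')"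
    "worthwhile (fst (run True N f c \<delta> E kappa \<gamma>))"
    "conn_pairs N (fst (run True N f c \<delta> E kappa \<gamma>)) \<subseteq> K'"
  using doubled_run_simulates_complete[where K = "{}", OF assms worthwhile_empty conn_pairs_empty_subset]
  unfolding run_def by blast

lemma emerge_complete_subset_incomplete:
  "emerge True N f c \<delta> E kappa \<subseteq> emerge False N f c \<delta> E kappa"
proof
  fix g assume "g \<in> emerge True N f c \<delta> E kappa"
  then obtain \<gamma> where \<gamma>: "valid_path N \<gamma>" "g = fst (run True N f c \<delta> E kappa \<gamma>)"
    unfolding emerge_def by blast
  obtain K' where "run False N f c \<delta> E kappa (doubled \<gamma>) = (g, K')"
    using doubled_run_simulates_complete_from_empty[OF \<gamma>(1)] \<gamma>(2) by blast
  then show "g \<in> emerge False N f c \<delta> E kappa"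
    using emergeI \<gamma>(1) valid_path_doubled by blast
qed

lemma converge_complete_subset_incomplete:
  "converge True N f c \<delta> E kappa \<subseteq> converge False N f c \<delta> E kappa"
proof
  fix g assume "g \<in> converge True N f c \<delta> E kappa"
  then obtain \<gamma> where \<gamma>: "valid_path N \<gamma>" "g = fst (run True N f c \<delta> E kappa \<gamma>)"
      and stable_complete: "net_stable True N f c \<delta> E kappa (run True N f c \<delta> E kappa \<gamma>)"
    unfolding converge_def by blast
  obtain K' where K': "run False N f c \<delta> E kappa (doubled \<gamma>) = (g, K')" "worthwhile g"
      "conn_pairs N g \<subseteq> K'"
    using doubled_run_simulates_complete_from_empty[OF \<gamma>(1)] unfolding \<gamma>(2)[symmetric] by blast
  have fixed_complete: "move True {} g i j = g" if "i \<noteq> j" "i < N" "j < N" for i j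
  proof -
    define K0 where "K0 = snd (run True N f c \<delta> E kappa \<gamma>)"
    have "run True N f c \<delta> E kappa \<gamma> = (g, K0)" unfolding K0_def \<gamma>(2) by simp
    then have "move True K0 g i j = g"
      using net_stable_step_fixed[OF stable_complete that] by (simp add: step_eq)
    then show ?thesis using move_complete_indep by metis
  qed
  then have "\<forall>(i, j)\<in>set (all_pairs N). move True {} g i j = g"
    unfolding set_all_pairs by blast
  then obtain K'' where K'': "run_game False (g, K') (doubled (all_pairs N)) = (g, K'')" "K' \<subseteq> K''"
      "\<forall>(i, j)\<in>set (all_pairs N). link_agreed False K'' g i j = link_agreed True {} g i j"
    using doubled_run_learns_fixed_network[OF K'(2) valid_path_all_pairs _ K'(3)] by blast
  have "step_game False (g, K'') (i, j) = (g, K'')" if "i \<noteq> j" "i < N" "j < N" for i j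
  proof -
    have "link_agreed False K'' g i j = link_agreed True {} g i j"
      using K''(3) that unfolding set_all_pairs by blast
    then have "move False K'' g i j = g"
      using fixed_complete[OF that] unfolding move_def by simp
    moreover have "conn_pairs N g \<subseteq> K''" using K'(3) K''(2) by blast
    ultimately show ?thesis unfolding step_eq by (simp add: Un_absorb2)
  qed
  then have "net_stable False N f c \<delta> E kappa (g, K'')" by (rule net_stable_if_steps_fixed)
  moreover have "run False N f c \<delta> E kappa (doubled \<gamma> @ doubled (all_pairs N)) = (g, K'')"
    using K'(1) K''(1) unfolding run_def run_from_append by simp
  moreover have "valid_path N (doubled \<gamma> @ doubled (all_pairs N))"
    using \<gamma>(1) valid_path_all_pairs by (simp add: valid_path_append valid_path_doubled)
  ultimately show "g \<in> converge False N f c \<delta> E kappa" using convergeI by blast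
qed

end

end

theorem theorem1:
  fixes N :: nat and H :: "'x measure" and f :: "'x \<Rightarrow> real"
    and c \<delta> :: real and kappa :: "nat \<Rightarrow> 'x"
  assumes "N \<ge> 2"
    and "prob_space H"
    and "\<forall>x\<in>space H. f x > 0"
    and "integrable H f"
    and "c > 0" and "0 < \<delta>" and "\<delta> < 1"
    and "\<forall>i<N. kappa i \<in> space H"
  shows "((integral\<^sup>L H f) < c \<longrightarrow>
            emerge False N f c \<delta> (integral\<^sup>L H f) kappa = {{}} \<and>
            converge False N f c \<delta> (integral\<^sup>L H f) kappa = {{}})
       \<and> ((integral\<^sup>L H f) \<ge> c \<longrightarrow>
            emerge True N f c \<delta> (integral\<^sup>L H f) kappa \<subseteq> emerge False N f c \<delta> (integral\<^sup>L H f) kappa \<and>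
            converge True N f c \<delta> (integral\<^sup>L H f) kappa \<subseteq> converge False N f c \<delta> (integral\<^sup>L H f) kappa)"
proof -
  interpret network_game N f c \<delta> "integral\<^sup>L H f" kappa
    by unfold_locales (use assms in auto)
  show ?thesis
  proof (intro conjI impI)
    assume "integral\<^sup>L H f < c"
    then show "emerge False N f c \<delta> (integral\<^sup>L H f) kappa = {{}}"
      "converge False N f c \<delta> (integral\<^sup>L H f) kappa = {{}}"
      by (rule emerge_converge_if_prior_below_cost)+
  next
    assume "c \<le> integral\<^sup>L H f"
    then show "emerge True N f c \<delta> (integral\<^sup>L H f) kappa \<subseteq> emerge False N f c \<delta> (integral\<^sup>L H f) kappa"
      "converge True N f c \<delta> (integral\<^sup>L H f) kappa \<subseteq> converge False N f c \<delta> (integral\<^sup>L H f) kappa"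
      by (rule emerge_complete_subset_incomplete converge_complete_subset_incomplete)+
  qed
qed

end
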